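(* Let $S$ be a Hausdorff semitopological semigroup. If $M$ is a maximal ideal of $Lmc(S)$, then $E(M)$ is an $e$-ultrafilter; and if $\mathcal{A}$ is an $e$-ultrafilter, then $E^-(\mathcal{A})$ is a maximal ideal of $Lmc(S)$. Consequently $M\mapsto E(M)$ is a bijection from the set of maximal ideals of $Lmc(S)$ onto the set of $e$-ultrafilters.
   Context: A Hausdorff semitopological semigroup is a semigroup $S$ with a Hausdorff topology such that all maps $\lambda_s(x)=sx$, $r_s(x)=xs$ are continuous. $\mathcal{CB}(S)$: bounded continuous complex functions with sup norm; $\beta S$ its spectrum with Gelfand topology; $L_sf(x)=f(sx)$, $(T_\mu f)(s)=\mu(L_sf)$; $Lmc(S)=\{f\in\mathcal{CB}(S):T_\mu f\in\mathcal{CB}(S)\ \forall \mu\in\beta S\}$. $Z(Lmc(S))=\{f^{-1}(0):f\in Lmc(S)\}$. $E_\epsilon(f)=\{x\in S:|f(x)|\le\epsilon\}$; $E(I)=\{E_\epsilon(f):f\in I,\epsilon>0\}$; $E^-(\mathcal{A})=\{f\in Lmc(S):E_\epsilon(f)\in\mathcal{A}\ \forall\epsilon>0\}$. A $z$-filter is $\mathcal{A}\subseteq Z(Lmc(S))$ with $\emptyset\notin\mathcal{A}$, $S\in\mathcal{A}$, closed under finite intersections and upward closed within $Z(Lmc(S))$. An $e$-filter is a $z$-filter $\mathcal{A}$ with $E(E^-(\mathcal{A}))=\mathcal{A}$; an $e$-ultrafilter is an $e$-filter not properly contained in any other $e$-filter. *)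

theory Defs
  imports "HOL-Analysis.Analysis"
begin

text \<open>The semigroup S is the whole type 'a (class semigroup_mult) with a
Hausdorff topology (class t2_space). Separate continuity of translations is
assumed in the theorem.\<close>

definition CB :: "('a::topological_space \<Rightarrow> complex) set" where
  "CB = {f. continuous_on UNIV f \<and> bounded (range f)}"

text \<open>betaS: spectrum of CB(S), i.e. nonzero multiplicative linear functionals
on CB(S) (only their values on CB(S) are relevant).\<close>
definition betaS :: "(('a::topological_space \<Rightarrow> complex) \<Rightarrow> complex) set" where
  "betaS = {\<mu>. (\<forall>f\<in>CB. \<forall>g\<in>CB. \<mu> (\<lambda>x. f x + g x) = \<mu> f + \<mu> g)
              \<and> (\<forall>f\<in>CB. \<forall>c. \<mu> (\<lambda>x. c * f x) = c * \<mu> f)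
              \<and> (\<forall>f\<in>CB. \<forall>g\<in>CB. \<mu> (\<lambda>x. f x * g x) = \<mu> f * \<mu> g)
              \<and> (\<exists>f\<in>CB. \<mu> f \<noteq> 0)}"

definition Ltrans :: "'a::times \<Rightarrow> ('a \<Rightarrow> complex) \<Rightarrow> ('a \<Rightarrow> complex)" where
  "Ltrans s f = (\<lambda>x. f (s * x))"

definition Tmu :: "(('a \<Rightarrow> complex) \<Rightarrow> complex) \<Rightarrow> ('a::times \<Rightarrow> complex) \<Rightarrow> ('a \<Rightarrow> complex)" where
  "Tmu \<mu> f = (\<lambda>s. \<mu> (Ltrans s f))"

definition Lmc :: "('a::{topological_space,times} \<Rightarrow> complex) set" where
  "Lmc = {f \<in> CB. \<forall>\<mu>\<in>betaS. Tmu \<mu> f \<in> CB}"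

definition Lmc_ideal :: "('a::{topological_space,times} \<Rightarrow> complex) set \<Rightarrow> bool" where
  "Lmc_ideal I \<longleftrightarrow> I \<subseteq> Lmc \<and> (\<lambda>x. 0) \<in> I
     \<and> (\<forall>f\<in>I. \<forall>g\<in>I. (\<lambda>x. f x + g x) \<in> I)
     \<and> (\<forall>f\<in>I. \<forall>c. (\<lambda>x. c * f x) \<in> I)
     \<and> (\<forall>f\<in>I. \<forall>g\<in>Lmc. (\<lambda>x. g x * f x) \<in> I)"

definition Lmc_maximal_ideal :: "('a::{topological_space,times} \<Rightarrow> complex) set \<Rightarrow> bool" where
  "Lmc_maximal_ideal M \<longleftrightarrow> Lmc_ideal M \<and> M \<noteq> Lmc
     \<and> (\<forall>J. Lmc_ideal J \<and> J \<noteq> Lmc \<and> M \<subseteq> J \<longrightarrow> J = M)"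

definition Zsets :: "'a::{topological_space,times} set set" where
  "Zsets = {{x. f x = 0} | f. f \<in> Lmc}"

definition Eeps :: "('a \<Rightarrow> complex) \<Rightarrow> real \<Rightarrow> 'a set" where
  "Eeps f \<epsilon> = {x. cmod (f x) \<le> \<epsilon>}"

definition Eset :: "('a \<Rightarrow> complex) set \<Rightarrow> 'a set set" where
  "Eset I = {Eeps f \<epsilon> | f \<epsilon>. f \<in> I \<and> \<epsilon> > 0}"

definition Eminus :: "'a::{topological_space,times} set set \<Rightarrow> ('a \<Rightarrow> complex) set" where
  "Eminus \<A> = {f \<in> Lmc. \<forall>\<epsilon>>0. Eeps f \<epsilon> \<in> \<A>}"

definition z_filter :: "'a::{topological_space,times} set set \<Rightarrow> bool" where
  "z_filter \<A> \<longleftrightarrow> \<A> \<subseteq> Zsets \<and> {} \<notin> \<A> \<and> UNIV \<in> \<A>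
     \<and> (\<forall>A\<in>\<A>. \<forall>B\<in>\<A>. A \<inter> B \<in> \<A>)
     \<and> (\<forall>A\<in>\<A>. \<forall>B\<in>Zsets. A \<subseteq> B \<longrightarrow> B \<in> \<A>)"

definition e_filter :: "'a::{topological_space,times} set set \<Rightarrow> bool" where
  "e_filter \<A> \<longleftrightarrow> z_filter \<A> \<and> Eset (Eminus \<A>) = \<A>"

definition e_ultrafilter :: "'a::{topological_space,times} set set \<Rightarrow> bool" where
  "e_ultrafilter \<A> \<longleftrightarrow> e_filter \<A> \<and> (\<forall>\<B>. e_filter \<B> \<and> \<A> \<subseteq> \<B> \<longrightarrow> \<B> = \<A>)"

end

theory Submission
  imports Defs
begin

text \<open>Every character \<open>\<mu>\<close> of CB(S) commutes with continuous functions of two variables: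
  otherwise a suitable sum of squared moduli would be bounded away from 0, hence invertible,
  yet annihilated by \<open>\<mu>\<close>. Since left translations are continuous, \<open>T\<^sub>\<mu>\<close> then commutes with
  them as well, so Lmc(S) is closed under continuous functional calculus. This makes \<open>E\<^sup>-\<close> of
  a z-filter a proper ideal and \<open>E\<close> of a proper ideal an e-filter. As \<open>E(I) \<subseteq> \<A> \<longleftrightarrow> I \<subseteq> E\<^sup>-(\<A>)\<close>,
  maximality passes back and forth between the two sides, and \<open>E\<^sup>-\<close> inverts \<open>E\<close>.\<close>

lemma CB_const: "(\<lambda>x. c) \<in> CB"
  unfolding CB_def by auto

lemma CB_bounded:
  assumes "f \<in> CB"
  obtains B where "B \<ge> 0" "\<And>x. cmod (f x) \<le> B"
proof -
  obtain B where "\<forall>y\<in>range f. norm y \<le> B"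
    using assms unfolding CB_def bounded_iff by auto
  then show thesis
    using that[of B] norm_ge_zero order_trans by blast
qed

lemma CB_continuous_compose2:
  assumes f: "f \<in> CB" and g: "g \<in> CB" and H: "continuous_on UNIV H"
  shows "(\<lambda>x. H (f x, g x)) \<in> CB"
proof -
  have cf: "continuous_on UNIV f" and bf: "bounded (range f)"
    and cg: "continuous_on UNIV g" and bg: "bounded (range g)"
    using f g unfolding CB_def by auto
  let ?K = "closure (range f) \<times> closure (range g)"
  have "compact ?K"
    using bf bg by (simp add: compact_Times compact_closure)
  then have "bounded (H ` ?K)"
    using compact_continuous_image[OF continuous_on_subset[OF H]] compact_imp_bounded by blast
  moreover have "range (\<lambda>x. H (f x, g x)) \<subseteq> H ` ?K"
    using closure_subset[of "range f"] closure_subset[of "range g"] by auto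
  ultimately have "bounded (range (\<lambda>x. H (f x, g x)))"
    by (rule bounded_subset)
  moreover have "continuous_on UNIV (\<lambda>x. H (f x, g x))"
    using continuous_on_compose2[OF H continuous_on_Pair[OF cf cg]] by auto
  ultimately show ?thesis
    unfolding CB_def by auto
qed

lemma CB_continuous_compose:
  assumes "f \<in> CB" and "continuous_on UNIV h"
  shows "(\<lambda>x. h (f x)) \<in> CB"
proof -
  have "continuous_on UNIV (\<lambda>p::complex \<times> complex. h (fst p))"
    using continuous_on_compose2[OF assms(2) continuous_on_fst[OF continuous_on_id]] by simp
  from CB_continuous_compose2[OF assms(1) assms(1) this] show ?thesis
    by simp
qed

lemma CB_add: "f \<in> CB \<Longrightarrow> g \<in> CB \<Longrightarrow> (\<lambda>x. f x + g x) \<in> CB"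
  using CB_continuous_compose2[of f g "\<lambda>p. fst p + snd p"] by (simp add: continuous_intros)

lemma betaS_add: "\<mu> \<in> betaS \<Longrightarrow> f \<in> CB \<Longrightarrow> g \<in> CB \<Longrightarrow> \<mu> (\<lambda>x. f x + g x) = \<mu> f + \<mu> g"
  unfolding betaS_def by auto

lemma betaS_mult: "\<mu> \<in> betaS \<Longrightarrow> f \<in> CB \<Longrightarrow> g \<in> CB \<Longrightarrow> \<mu> (\<lambda>x. f x * g x) = \<mu> f * \<mu> g"
  unfolding betaS_def by auto

lemma betaS_scale: "\<mu> \<in> betaS \<Longrightarrow> f \<in> CB \<Longrightarrow> \<mu> (\<lambda>x. c * f x) = c * \<mu> f"
  unfolding betaS_def by auto

lemma betaS_const:
  assumes mu: "\<mu> \<in> betaS"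
  shows "\<mu> (\<lambda>x. c) = c"
proof -
  obtain f where f: "f \<in> CB" "\<mu> f \<noteq> 0"
    using mu unfolding betaS_def by auto
  have "\<mu> (\<lambda>x. 1 * f x) = \<mu> (\<lambda>x. 1) * \<mu> f"
    by (rule betaS_mult[OF mu CB_const f(1)])
  then have "\<mu> (\<lambda>x. 1) = 1"
    using f(2) by simp
  then show ?thesis
    using betaS_scale[OF mu CB_const, of c 1] by simp
qed

lemma betaS_diff_const:
  assumes "\<mu> \<in> betaS" and "f \<in> CB"
  shows "\<mu> (\<lambda>x. f x - c) = \<mu> f - c"
  using betaS_add[OF assms CB_const, of "- c"] betaS_const[OF assms(1), of "- c"] by simp

text \<open>A function bounded away from 0 is invertible in CB, so no character kills it.\<close>
lemma betaS_eq_0_imp_small: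
  assumes mu: "\<mu> \<in> betaS" and k: "k \<in> CB" and "\<mu> k = 0" and "\<epsilon> > 0"
  shows "\<exists>x. cmod (k x) < \<epsilon>"
proof (rule ccontr)
  assume "\<nexists>x. cmod (k x) < \<epsilon>"
  then have big: "\<And>x. \<epsilon> \<le> cmod (k x)"
    by (meson not_le)
  define h where "h = (\<lambda>z::complex. cnj z / complex_of_real ((max (cmod z) \<epsilon>)\<^sup>2))"
  have hk: "(\<lambda>x. h (k x)) \<in> CB"
    unfolding h_def using \<open>\<epsilon> > 0\<close>
    by (intro CB_continuous_compose[OF k]) (auto intro!: continuous_intros)
  have "h (k x) * k x = 1" for x
  proof -
    have "max (cmod (k x)) \<epsilon> = cmod (k x)" "k x \<noteq> 0"
      using big[of x] \<open>\<epsilon> > 0\<close> by auto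
    then show ?thesis
      unfolding h_def using complex_norm_square[of "k x"] by (simp add: field_simps)
  qed
  then have "\<mu> (\<lambda>x. h (k x)) * \<mu> k = 1"
    using betaS_mult[OF mu hk k] betaS_const[OF mu, of 1] by simp
  with \<open>\<mu> k = 0\<close> show False
    by simp
qed

lemma betaS_norm_diff_square:
  assumes mu: "\<mu> \<in> betaS" and f: "f \<in> CB"
  shows "\<mu> (\<lambda>x. complex_of_real ((cmod (f x - \<mu> f))\<^sup>2)) = 0"
proof -
  let ?g = "\<lambda>x. f x - \<mu> f"
  have g: "?g \<in> CB" and cnj_g: "(\<lambda>x. cnj (?g x)) \<in> CB"
    by (intro CB_continuous_compose[OF f] continuous_intros)+
  have "\<mu> (\<lambda>x. ?g x * cnj (?g x)) = 0"
    using betaS_mult[OF mu g cnj_g] betaS_diff_const[OF mu f] by simp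
  then show ?thesis
    by (simp only: complex_norm_square)
qed

text \<open>Otherwise \<open>k\<close> below would be bounded away from 0 (near the point \<open>(\<mu> g\<^sub>1, \<mu> g\<^sub>2)\<close> by
  continuity of \<open>H\<close>, away from it by the last two summands), although \<open>\<mu> k = 0\<close>.\<close>
lemma betaS_continuous_compose2:
  assumes mu: "\<mu> \<in> betaS" and g1: "g1 \<in> CB" and g2: "g2 \<in> CB" and H: "continuous_on UNIV H"
  shows "\<mu> (\<lambda>x. H (g1 x, g2 x)) = H (\<mu> g1, \<mu> g2)"
proof (rule ccontr)
  define u where "u = (\<lambda>x. H (g1 x, g2 x))"
  define c where "c = (\<mu> g1, \<mu> g2)"
  define d where "d = dist (\<mu> u) (H c)"
  assume "\<mu> (\<lambda>x. H (g1 x, g2 x)) \<noteq> H (\<mu> g1, \<mu> g2)"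
  then have "d > 0"
    unfolding d_def u_def c_def by simp
  then obtain \<delta> where "\<delta> > 0" and \<delta>: "\<And>p. dist p c < \<delta> \<Longrightarrow> dist (H p) (H c) < d / 2"
    using H unfolding continuous_on_iff by (metis UNIV_I half_gt_zero)
  have u: "u \<in> CB"
    unfolding u_def using CB_continuous_compose2[OF g1 g2 H] .
  let ?sq = "\<lambda>f x. complex_of_real ((cmod (f x - \<mu> f))\<^sup>2)"
  have sq: "?sq f \<in> CB" if "f \<in> CB" for f
    by (intro CB_continuous_compose[OF that] continuous_intros)
  define k where "k = (\<lambda>x. ?sq u x + (?sq g1 x + ?sq g2 x))"
  have "k \<in> CB"
    unfolding k_def by (intro CB_add sq u g1 g2)
  moreover have "\<mu> k = \<mu> (?sq u) + (\<mu> (?sq g1) + \<mu> (?sq g2))"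
    unfolding k_def by (simp only: betaS_add[OF mu] CB_add sq u g1 g2)
  then have "\<mu> k = 0"
    using betaS_norm_diff_square[OF mu] u g1 g2 by simp
  ultimately obtain x where kx: "cmod (k x) < min ((d / 2)\<^sup>2) ((\<delta> / 2)\<^sup>2)"
    using betaS_eq_0_imp_small[OF mu, of k "min ((d / 2)\<^sup>2) ((\<delta> / 2)\<^sup>2)"] \<open>d > 0\<close> \<open>\<delta> > 0\<close>
    by auto
  have "cmod (k x) = (dist (u x) (\<mu> u))\<^sup>2 + ((dist (g1 x) (\<mu> g1))\<^sup>2 + (dist (g2 x) (\<mu> g2))\<^sup>2)"
    unfolding k_def dist_norm by (simp only: of_real_add[symmetric] norm_of_real) simp
  with kx have "(dist (u x) (\<mu> u))\<^sup>2 < (d / 2)\<^sup>2"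
    and "(dist (g1 x) (\<mu> g1))\<^sup>2 < (\<delta> / 2)\<^sup>2" and "(dist (g2 x) (\<mu> g2))\<^sup>2 < (\<delta> / 2)\<^sup>2"
    by (smt (verit) zero_le_power2)+
  then have ux: "dist (u x) (\<mu> u) < d / 2"
    and "dist (g1 x) (\<mu> g1) < \<delta> / 2" and "dist (g2 x) (\<mu> g2) < \<delta> / 2"
    using \<open>d > 0\<close> \<open>\<delta> > 0\<close> by (auto dest: power_less_imp_less_base)
  then have "dist (g1 x, g2 x) c < \<delta>"
    unfolding c_def dist_Pair_Pair by (simp add: sqrt_sum_squares_half_less)
  then have "dist (u x) (H c) < d / 2"
    unfolding u_def using \<delta> by blast
  with ux show False
    unfolding d_def by (metis dist_triangle_half_r less_irrefl)
qed

lemma CB_left_translate: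
  fixes f :: "'a::{topological_space,times} \<Rightarrow> complex"
  assumes left_cont: "continuous_on UNIV ((*) s)" and f: "f \<in> CB"
  shows "Ltrans s f \<in> CB"
proof -
  have "continuous_on UNIV f" and "bounded (range f)"
    using f unfolding CB_def by auto
  moreover have "range (\<lambda>x. f (s * x)) \<subseteq> range f"
    by auto
  ultimately show ?thesis
    unfolding CB_def Ltrans_def
    using continuous_on_compose2[OF _ left_cont] bounded_subset by auto
qed

lemma Lmc_CB: "f \<in> Lmc \<Longrightarrow> f \<in> CB"
  unfolding Lmc_def by auto

lemma Lmc_const: "(\<lambda>x. c) \<in> Lmc"
  unfolding Lmc_def Tmu_def Ltrans_def by (simp add: CB_const betaS_const)

lemma Lmc_continuous_compose2:
  fixes f g :: "'a::{topological_space,times} \<Rightarrow> complex"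
  assumes left_cont: "\<And>s::'a. continuous_on UNIV ((*) s)"
    and f: "f \<in> Lmc" and g: "g \<in> Lmc" and H: "continuous_on UNIV H"
  shows "(\<lambda>x. H (f x, g x)) \<in> Lmc"
proof -
  have "Tmu \<mu> (\<lambda>x. H (f x, g x)) \<in> CB" if mu: "\<mu> \<in> betaS" for \<mu>
  proof -
    have "Tmu \<mu> (\<lambda>x. H (f x, g x)) = (\<lambda>s. H (Tmu \<mu> f s, Tmu \<mu> g s))"
      using betaS_continuous_compose2[OF mu CB_left_translate CB_left_translate H]
        left_cont Lmc_CB[OF f] Lmc_CB[OF g]
      unfolding Tmu_def by (simp add: Ltrans_def)
    moreover have "Tmu \<mu> f \<in> CB" "Tmu \<mu> g \<in> CB"
      using f g mu unfolding Lmc_def by auto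
    ultimately show ?thesis
      using CB_continuous_compose2[OF _ _ H] by simp
  qed
  then show ?thesis
    using CB_continuous_compose2[OF Lmc_CB[OF f] Lmc_CB[OF g] H] unfolding Lmc_def by auto
qed

lemma Lmc_continuous_compose:
  fixes f :: "'a::{topological_space,times} \<Rightarrow> complex"
  assumes left_cont: "\<And>s::'a. continuous_on UNIV ((*) s)"
    and f: "f \<in> Lmc" and h: "continuous_on UNIV h"
  shows "(\<lambda>x. h (f x)) \<in> Lmc"
proof -
  have "continuous_on UNIV (\<lambda>p::complex \<times> complex. h (fst p))"
    using continuous_on_compose2[OF h continuous_on_fst[OF continuous_on_id]] by simp
  from Lmc_continuous_compose2[OF left_cont f f this] show ?thesis
    by simp
qed

lemma Lmc_add:
  fixes f g :: "'a::{topological_space,times} \<Rightarrow> complex"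
  assumes "\<And>s::'a. continuous_on UNIV ((*) s)" and "f \<in> Lmc" and "g \<in> Lmc"
  shows "(\<lambda>x. f x + g x) \<in> Lmc"
  using Lmc_continuous_compose2[OF assms, of "\<lambda>p. fst p + snd p"] by (simp add: continuous_intros)

lemma Lmc_mult:
  fixes f g :: "'a::{topological_space,times} \<Rightarrow> complex"
  assumes "\<And>s::'a. continuous_on UNIV ((*) s)" and "f \<in> Lmc" and "g \<in> Lmc"
  shows "(\<lambda>x. f x * g x) \<in> Lmc"
  using Lmc_continuous_compose2[OF assms, of "\<lambda>p. fst p * snd p"] by (simp add: continuous_intros)

lemma Zsets_I: "f \<in> Lmc \<Longrightarrow> {x. f x = 0} \<in> Zsets"
  unfolding Zsets_def by blast

lemma Eeps_in_Zsets:
  fixes f :: "'a::{topological_space,times} \<Rightarrow> complex"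
  assumes left_cont: "\<And>s::'a. continuous_on UNIV ((*) s)" and f: "f \<in> Lmc"
  shows "Eeps f \<epsilon> \<in> Zsets"
proof -
  let ?h = "\<lambda>z::complex. complex_of_real (max (cmod z - \<epsilon>) 0)"
  have "Eeps f \<epsilon> = {x. ?h (f x) = 0}"
    unfolding Eeps_def by auto
  then show ?thesis
    using Zsets_I[OF Lmc_continuous_compose[OF left_cont f, of ?h]] by (simp add: continuous_intros)
qed

lemma Zsets_Int:
  fixes A B :: "'a::{topological_space,times} set"
  assumes left_cont: "\<And>s::'a. continuous_on UNIV ((*) s)" and "A \<in> Zsets" and "B \<in> Zsets"
  shows "A \<inter> B \<in> Zsets"
proof -
  obtain f g where f: "f \<in> Lmc" "A = {x. f x = 0}" and g: "g \<in> Lmc" "B = {x. g x = 0}"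
    using assms(2,3) unfolding Zsets_def by auto
  let ?H = "\<lambda>p::complex \<times> complex. complex_of_real (cmod (fst p) + cmod (snd p))"
  have "A \<inter> B = {x. ?H (f x, g x) = 0}"
    using f(2) g(2) by (auto simp: add_nonneg_eq_0_iff simp flip: of_real_add)
  then show ?thesis
    using Zsets_I[OF Lmc_continuous_compose2[OF left_cont f(1) g(1), of ?H]]
    by (simp add: continuous_intros)
qed

lemma Eset_I: "f \<in> I \<Longrightarrow> \<epsilon> > 0 \<Longrightarrow> Eeps f \<epsilon> \<in> Eset I"
  unfolding Eset_def by blast

lemma Eminus_subset_Lmc: "Eminus \<A> \<subseteq> Lmc"
  unfolding Eminus_def by auto

lemma Eset_subset_iff_subset_Eminus:
  assumes "I \<subseteq> Lmc"
  shows "Eset I \<subseteq> \<A> \<longleftrightarrow> I \<subseteq> Eminus \<A>"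
  using assms unfolding Eset_def Eminus_def by blast

lemma Eset_Eminus_subset: "Eset (Eminus \<A>) \<subseteq> \<A>"
  using Eset_subset_iff_subset_Eminus[OF Eminus_subset_Lmc] by blast

lemma subset_Eminus_Eset: "I \<subseteq> Lmc \<Longrightarrow> I \<subseteq> Eminus (Eset I)"
  using Eset_subset_iff_subset_Eminus by blast

lemma Eset_mono: "I \<subseteq> J \<Longrightarrow> Eset I \<subseteq> Eset J"
  unfolding Eset_def by blast

lemma Eminus_memI:
  fixes f :: "'a::{topological_space,times} \<Rightarrow> complex"
  assumes left_cont: "\<And>s::'a. continuous_on UNIV ((*) s)"
    and "z_filter \<A>" and f: "f \<in> Lmc" and small: "\<And>\<epsilon>. \<epsilon> > 0 \<Longrightarrow> \<exists>A\<in>\<A>. A \<subseteq> Eeps f \<epsilon>"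
  shows "f \<in> Eminus \<A>"
proof -
  have "Eeps f \<epsilon> \<in> \<A>" if "\<epsilon> > 0" for \<epsilon>
    using \<open>z_filter \<A>\<close> small[OF that] Eeps_in_Zsets[OF left_cont f] unfolding z_filter_def by blast
  with f show ?thesis
    unfolding Eminus_def by auto
qed

lemma Eminus_add:
  fixes \<A> :: "'a::{topological_space,times} set set"
  assumes left_cont: "\<And>s::'a. continuous_on UNIV ((*) s)" and zf: "z_filter \<A>"
    and f: "f \<in> Eminus \<A>" and g: "g \<in> Eminus \<A>"
  shows "(\<lambda>x. f x + g x) \<in> Eminus \<A>"
proof (rule Eminus_memI[OF left_cont zf])
  show "(\<lambda>x. f x + g x) \<in> Lmc"
    using Lmc_add[OF left_cont] f g Eminus_subset_Lmc by blast
  fix \<epsilon> :: real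
  assume "\<epsilon> > 0"
  then have "Eeps f (\<epsilon>/2) \<inter> Eeps g (\<epsilon>/2) \<in> \<A>"
    using f g zf unfolding Eminus_def z_filter_def by auto
  moreover have "Eeps f (\<epsilon>/2) \<inter> Eeps g (\<epsilon>/2) \<subseteq> Eeps (\<lambda>x. f x + g x) \<epsilon>"
  proof
    fix x
    assume "x \<in> Eeps f (\<epsilon>/2) \<inter> Eeps g (\<epsilon>/2)"
    then show "x \<in> Eeps (\<lambda>x. f x + g x) \<epsilon>"
      unfolding Eeps_def using norm_triangle_ineq[of "f x" "g x"] by simp
  qed
  ultimately show "\<exists>A\<in>\<A>. A \<subseteq> Eeps (\<lambda>x. f x + g x) \<epsilon>"
    by blast
qed

lemma Eminus_mult:
  fixes \<A> :: "'a::{topological_space,times} set set"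
  assumes left_cont: "\<And>s::'a. continuous_on UNIV ((*) s)" and zf: "z_filter \<A>"
    and f: "f \<in> Eminus \<A>" and g: "g \<in> Lmc"
  shows "(\<lambda>x. g x * f x) \<in> Eminus \<A>"
proof (rule Eminus_memI[OF left_cont zf])
  show "(\<lambda>x. g x * f x) \<in> Lmc"
    using Lmc_mult[OF left_cont] f g Eminus_subset_Lmc by blast
  obtain B where "B \<ge> 0" and B: "\<And>x. cmod (g x) \<le> B"
    using CB_bounded[OF Lmc_CB[OF g]] by blast
  fix \<epsilon> :: real
  assume "\<epsilon> > 0"
  then have "Eeps f (\<epsilon> / (B + 1)) \<in> \<A>"
    using f \<open>B \<ge> 0\<close> unfolding Eminus_def by auto
  moreover have "Eeps f (\<epsilon> / (B + 1)) \<subseteq> Eeps (\<lambda>x. g x * f x) \<epsilon>"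
  proof
    fix x
    assume "x \<in> Eeps f (\<epsilon> / (B + 1))"
    then have "cmod (f x) \<le> \<epsilon> / (B + 1)"
      unfolding Eeps_def by simp
    then have "cmod (g x * f x) \<le> B * (\<epsilon> / (B + 1))"
      unfolding norm_mult using B[of x] \<open>B \<ge> 0\<close> by (intro mult_mono) auto
    also have "\<dots> \<le> \<epsilon>"
      using \<open>B \<ge> 0\<close> \<open>\<epsilon> > 0\<close> by (simp add: field_simps)
    finally show "x \<in> Eeps (\<lambda>x. g x * f x) \<epsilon>"
      unfolding Eeps_def by simp
  qed
  ultimately show "\<exists>A\<in>\<A>. A \<subseteq> Eeps (\<lambda>x. g x * f x) \<epsilon>"
    by blast
qed

lemma Lmc_ideal_Eminus:
  fixes \<A> :: "'a::{topological_space,times} set set"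
  assumes left_cont: "\<And>s::'a. continuous_on UNIV ((*) s)" and zf: "z_filter \<A>"
  shows "Lmc_ideal (Eminus \<A>)"
proof -
  have "(\<lambda>x. 0) \<in> Eminus \<A>"
    using zf Lmc_const unfolding z_filter_def Eminus_def Eeps_def by auto
  moreover have "(\<lambda>x. c * f x) \<in> Eminus \<A>" if "f \<in> Eminus \<A>" for f c
    using Eminus_mult[OF left_cont zf that Lmc_const] .
  ultimately show ?thesis
    unfolding Lmc_ideal_def
    using Eminus_subset_Lmc Eminus_add[OF left_cont zf] Eminus_mult[OF left_cont zf] by blast
qed

lemma Eminus_neq_Lmc:
  assumes "z_filter \<A>"
  shows "Eminus \<A> \<noteq> Lmc"
proof
  assume "Eminus \<A> = Lmc"
  then have "(\<lambda>x. 1) \<in> Eminus \<A>"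
    using Lmc_const by simp
  then have "Eeps (\<lambda>x. 1) (1/2) \<in> \<A>"
    unfolding Eminus_def by simp
  moreover have "Eeps (\<lambda>x. 1) (1/2) = {}"
    unfolding Eeps_def by simp
  ultimately show False
    using assms unfolding z_filter_def by metis
qed

lemma Lmc_idealD:
  assumes "Lmc_ideal J"
  shows "J \<subseteq> Lmc" and "(\<lambda>x. 0) \<in> J"
    and "\<And>f g. f \<in> J \<Longrightarrow> g \<in> J \<Longrightarrow> (\<lambda>x. f x + g x) \<in> J"
    and "\<And>f g. f \<in> J \<Longrightarrow> g \<in> Lmc \<Longrightarrow> (\<lambda>x. g x * f x) \<in> J"
  using assms unfolding Lmc_ideal_def by auto

lemma Lmc_ideal_eq_Lmc_if_bounded_below:
  fixes J :: "('a::{topological_space,times} \<Rightarrow> complex) set"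
  assumes left_cont: "\<And>s::'a. continuous_on UNIV ((*) s)" and J: "Lmc_ideal J"
    and f: "f \<in> J" and "\<epsilon> > 0" and big: "\<And>x. \<epsilon> \<le> cmod (f x)"
  shows "J = Lmc"
proof -
  define h where "h = (\<lambda>z::complex. cnj z / complex_of_real ((max (cmod z) \<epsilon>)\<^sup>2))"
  have "continuous_on UNIV h"
    unfolding h_def using \<open>\<epsilon> > 0\<close> by (auto intro!: continuous_intros)
  then have "(\<lambda>x. h (f x)) \<in> Lmc"
    using f Lmc_idealD(1)[OF J] Lmc_continuous_compose[OF left_cont] by blast
  from Lmc_idealD(4)[OF J f this] have "(\<lambda>x. h (f x) * f x) \<in> J" .
  moreover have "h (f x) * f x = 1" for x
  proof -
    have "max (cmod (f x)) \<epsilon> = cmod (f x)" "f x \<noteq> 0"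
      using big[of x] \<open>\<epsilon> > 0\<close> by auto
    then show ?thesis
      unfolding h_def using complex_norm_square[of "f x"] by (simp add: field_simps)
  qed
  ultimately have one: "(\<lambda>x. 1) \<in> J"
    by simp
  have "g \<in> J" if "g \<in> Lmc" for g
    using Lmc_idealD(4)[OF J one that] by simp
  with Lmc_idealD(1)[OF J] show ?thesis
    by blast
qed

lemma empty_notin_Eset:
  fixes J :: "('a::{topological_space,times} \<Rightarrow> complex) set"
  assumes left_cont: "\<And>s::'a. continuous_on UNIV ((*) s)" and "Lmc_ideal J" and "J \<noteq> Lmc"
  shows "{} \<notin> Eset J"
proof
  assume "{} \<in> Eset J"
  then obtain f \<epsilon> where "f \<in> J" "\<epsilon> > 0" "Eeps f \<epsilon> = {}"
    unfolding Eset_def by auto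
  then have "\<epsilon> \<le> cmod (f x)" for x
    unfolding Eeps_def by (metis (no_types) empty_iff mem_Collect_eq nle_le)
  with Lmc_ideal_eq_Lmc_if_bounded_below[OF left_cont] assms(2,3) \<open>f \<in> J\<close> \<open>\<epsilon> > 0\<close>
  show False
    by blast
qed

text \<open>For \<open>A = Eeps f \<epsilon>\<close> and \<open>B\<close> the zero set of \<open>g\<close>, the function \<open>k\<close> below lies in \<open>J\<close>, and
  \<open>\<bar>k\<bar> = \<bar>f\<bar> / max \<epsilon> \<bar>f\<bar> \<le> 1\<close> on \<open>B\<close> while \<open>\<bar>k\<bar> = 1 + \<bar>g\<bar> > 1\<close> off \<open>B \<supseteq> A\<close>; so \<open>B = Eeps k 1\<close>.\<close>
lemma Eset_upward_closed:
  fixes J :: "('a::{topological_space,times} \<Rightarrow> complex) set"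
  assumes left_cont: "\<And>s::'a. continuous_on UNIV ((*) s)" and J: "Lmc_ideal J"
    and "A \<in> Eset J" and "B \<in> Zsets" and "A \<subseteq> B"
  shows "B \<in> Eset J"
proof -
  obtain f \<epsilon> where f: "f \<in> J" and "\<epsilon> > 0" and A: "A = Eeps f \<epsilon>"
    using \<open>A \<in> Eset J\<close> unfolding Eset_def by auto
  obtain g where g: "g \<in> Lmc" and B: "B = {x. g x = 0}"
    using \<open>B \<in> Zsets\<close> unfolding Zsets_def by auto
  let ?h = "\<lambda>p::complex \<times> complex. complex_of_real ((1 + cmod (snd p)) / max \<epsilon> (cmod (fst p)))"
  define k where "k = (\<lambda>x. ?h (f x, g x) * f x)"
  have "(\<lambda>x. ?h (f x, g x)) \<in> Lmc"
    using \<open>\<epsilon> > 0\<close> f g Lmc_idealD(1)[OF J]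
    by (intro Lmc_continuous_compose2[OF left_cont]) (auto intro!: continuous_intros)
  then have "k \<in> J"
    unfolding k_def using Lmc_idealD(4)[OF J f] by blast
  have "cmod (k x) \<le> 1 \<longleftrightarrow> g x = 0" for x
  proof -
    have k: "cmod (k x) = (1 + cmod (g x)) * cmod (f x) / max \<epsilon> (cmod (f x))"
      unfolding k_def norm_mult norm_of_real using \<open>\<epsilon> > 0\<close> by simp
    show ?thesis
    proof (cases "g x = 0")
      case True
      then show ?thesis
        unfolding k using \<open>\<epsilon> > 0\<close> by (simp add: divide_le_eq_1 less_max_iff_disj)
    next
      case False
      then have "\<epsilon> < cmod (f x)"
        using \<open>A \<subseteq> B\<close> unfolding A B Eeps_def by (meson mem_Collect_eq not_le subsetD)
      then have "max \<epsilon> (cmod (f x)) = cmod (f x)" and "cmod (f x) \<noteq> 0"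
        using \<open>\<epsilon> > 0\<close> by auto
      then show ?thesis
        unfolding k using False by simp
    qed
  qed
  then have "B = Eeps k 1"
    unfolding B Eeps_def by auto
  with Eset_I[OF \<open>k \<in> J\<close>, of 1] show ?thesis
    by simp
qed

text \<open>\<open>k = \<bar>f/\<epsilon>\<bar>\<^sup>2 + \<bar>g/\<delta>\<bar>\<^sup>2\<close> lies in \<open>J\<close> and \<open>Eeps k 1 \<subseteq> A \<inter> B\<close>; the zero set \<open>A \<inter> B\<close> then
  belongs to \<open>Eset J\<close> by upward closure.\<close>
lemma Eset_Int:
  fixes J :: "('a::{topological_space,times} \<Rightarrow> complex) set"
  assumes left_cont: "\<And>s::'a. continuous_on UNIV ((*) s)" and J: "Lmc_ideal J"
    and "A \<in> Eset J" and "B \<in> Eset J"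
  shows "A \<inter> B \<in> Eset J"
proof -
  obtain f \<epsilon> where f: "f \<in> J" and "\<epsilon> > 0" and A: "A = Eeps f \<epsilon>"
    using \<open>A \<in> Eset J\<close> unfolding Eset_def by auto
  obtain g \<delta> where g: "g \<in> J" and "\<delta> > 0" and B: "B = Eeps g \<delta>"
    using \<open>B \<in> Eset J\<close> unfolding Eset_def by auto
  let ?c = "\<lambda>f (r::real) x. complex_of_real (inverse (r\<^sup>2)) * cnj (f x)"
  have weighted_square: "(\<lambda>x. ?c f r x * f x) \<in> J" if "f \<in> J" for f r
  proof -
    have "f \<in> Lmc"
      using that Lmc_idealD(1)[OF J] by blast
    then have "?c f r \<in> Lmc"
      by (rule Lmc_continuous_compose[OF left_cont]) (intro continuous_intros)
    from Lmc_idealD(4)[OF J that this] show ?thesis .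
  qed
  define k where "k = (\<lambda>x. ?c f \<epsilon> x * f x + ?c g \<delta> x * g x)"
  have "k \<in> J"
    unfolding k_def by (intro Lmc_idealD(3)[OF J] weighted_square f g)
  have "cmod (f x) \<le> \<epsilon> \<and> cmod (g x) \<le> \<delta>" if "cmod (k x) \<le> 1" for x
  proof -
    have "k x = complex_of_real ((cmod (f x) / \<epsilon>)\<^sup>2 + (cmod (g x) / \<delta>)\<^sup>2)"
      unfolding k_def power_divide of_real_add of_real_divide complex_norm_square
      by (simp add: field_simps)
    then have "(cmod (f x) / \<epsilon>)\<^sup>2 + (cmod (g x) / \<delta>)\<^sup>2 \<le> 1"
      using that abs_le_D1 by (simp only: norm_of_real)
    then have "(cmod (f x) / \<epsilon>)\<^sup>2 \<le> 1" and "(cmod (g x) / \<delta>)\<^sup>2 \<le> 1"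
      by (smt (verit) zero_le_power2)+
    then show ?thesis
      using \<open>\<epsilon> > 0\<close> \<open>\<delta> > 0\<close> by (simp add: power_le_one_iff)
  qed
  then have "Eeps k 1 \<subseteq> A \<inter> B"
    unfolding A B Eeps_def by blast
  moreover have "A \<inter> B \<in> Zsets"
    using f g Lmc_idealD(1)[OF J] unfolding A B
    by (intro Zsets_Int[OF left_cont] Eeps_in_Zsets[OF left_cont]) blast+
  ultimately show ?thesis
    using Eset_upward_closed[OF left_cont J Eset_I[OF \<open>k \<in> J\<close>, of 1]] by simp
qed

lemma e_filter_Eset:
  fixes J :: "('a::{topological_space,times} \<Rightarrow> complex) set"
  assumes left_cont: "\<And>s::'a. continuous_on UNIV ((*) s)" and J: "Lmc_ideal J" and "J \<noteq> Lmc"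
  shows "e_filter (Eset J)"
proof -
  have "Eset J \<subseteq> Zsets"
    using Lmc_idealD(1)[OF J] Eeps_in_Zsets[OF left_cont] unfolding Eset_def by blast
  moreover have "UNIV \<in> Eset J"
    using Eset_I[OF Lmc_idealD(2)[OF J], of 1] unfolding Eeps_def by simp
  ultimately have "z_filter (Eset J)"
    unfolding z_filter_def
    using empty_notin_Eset[OF left_cont J \<open>J \<noteq> Lmc\<close>] Eset_Int[OF left_cont J]
      Eset_upward_closed[OF left_cont J] by blast
  moreover have "Eset (Eminus (Eset J)) = Eset J"
    using Eset_Eminus_subset Eset_mono[OF subset_Eminus_Eset[OF Lmc_idealD(1)[OF J]]] by blast
  ultimately show ?thesis
    unfolding e_filter_def by blast
qed

lemma proper_Lmc_ideal_Eminus: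
  fixes \<A> :: "'a::{topological_space,times} set set"
  assumes "\<And>s::'a. continuous_on UNIV ((*) s)" and "e_filter \<A>"
  shows "Lmc_ideal (Eminus \<A>)" and "Eminus \<A> \<noteq> Lmc"
proof -
  have "z_filter \<A>"
    using assms(2) unfolding e_filter_def by blast
  then show "Lmc_ideal (Eminus \<A>)" and "Eminus \<A> \<noteq> Lmc"
    using Lmc_ideal_Eminus[OF assms(1)] Eminus_neq_Lmc by blast+
qed

lemma e_filterD: "e_filter \<A> \<Longrightarrow> Eset (Eminus \<A>) = \<A>"
  unfolding e_filter_def by blast

lemma e_ultrafilter_Eset:
  fixes M :: "('a::{topological_space,times} \<Rightarrow> complex) set"
  assumes left_cont: "\<And>s::'a. continuous_on UNIV ((*) s)" and M: "Lmc_maximal_ideal M"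
  shows "e_ultrafilter (Eset M)"
proof -
  have "Lmc_ideal M" "M \<noteq> Lmc" and maximal: "\<And>J. Lmc_ideal J \<Longrightarrow> J \<noteq> Lmc \<Longrightarrow> M \<subseteq> J \<Longrightarrow> J = M"
    using M unfolding Lmc_maximal_ideal_def by auto
  have "\<B> = Eset M" if "e_filter \<B>" and "Eset M \<subseteq> \<B>" for \<B>
  proof -
    have "M \<subseteq> Eminus \<B>"
      using \<open>Eset M \<subseteq> \<B>\<close> Eset_subset_iff_subset_Eminus Lmc_idealD(1)[OF \<open>Lmc_ideal M\<close>] by blast
    then have "Eminus \<B> = M"
      using maximal proper_Lmc_ideal_Eminus[OF left_cont \<open>e_filter \<B>\<close>] by blast
    then show ?thesis
      using e_filterD[OF \<open>e_filter \<B>\<close>] by simp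
  qed
  with e_filter_Eset[OF left_cont \<open>Lmc_ideal M\<close> \<open>M \<noteq> Lmc\<close>] show ?thesis
    unfolding e_ultrafilter_def by blast
qed

lemma Lmc_maximal_ideal_Eminus:
  fixes \<A> :: "'a::{topological_space,times} set set"
  assumes left_cont: "\<And>s::'a. continuous_on UNIV ((*) s)" and "e_ultrafilter \<A>"
  shows "Lmc_maximal_ideal (Eminus \<A>)"
proof -
  have "e_filter \<A>" and maximal: "\<And>\<B>. e_filter \<B> \<Longrightarrow> \<A> \<subseteq> \<B> \<Longrightarrow> \<B> = \<A>"
    using \<open>e_ultrafilter \<A>\<close> unfolding e_ultrafilter_def by auto
  have "J = Eminus \<A>" if "Lmc_ideal J" "J \<noteq> Lmc" "Eminus \<A> \<subseteq> J" for J
  proof -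
    have "\<A> \<subseteq> Eset J"
      using Eset_mono[OF \<open>Eminus \<A> \<subseteq> J\<close>] e_filterD[OF \<open>e_filter \<A>\<close>] by simp
    then have "Eset J = \<A>"
      using maximal e_filter_Eset[OF left_cont that(1,2)] by blast
    then have "J \<subseteq> Eminus \<A>"
      using Eset_subset_iff_subset_Eminus Lmc_idealD(1)[OF \<open>Lmc_ideal J\<close>] by blast
    with \<open>Eminus \<A> \<subseteq> J\<close> show ?thesis
      by blast
  qed
  with proper_Lmc_ideal_Eminus[OF left_cont \<open>e_filter \<A>\<close>] show ?thesis
    unfolding Lmc_maximal_ideal_def by blast
qed

lemma Eminus_Eset_maximal_ideal:
  fixes M :: "('a::{topological_space,times} \<Rightarrow> complex) set"
  assumes left_cont: "\<And>s::'a. continuous_on UNIV ((*) s)" and M: "Lmc_maximal_ideal M"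
  shows "Eminus (Eset M) = M"
proof -
  have "Lmc_ideal M" and maximal: "\<And>J. Lmc_ideal J \<Longrightarrow> J \<noteq> Lmc \<Longrightarrow> M \<subseteq> J \<Longrightarrow> J = M"
    using M unfolding Lmc_maximal_ideal_def by auto
  have "e_filter (Eset M)"
    using e_ultrafilter_Eset[OF left_cont M] unfolding e_ultrafilter_def by blast
  from proper_Lmc_ideal_Eminus[OF left_cont this] show ?thesis
    by (rule maximal) (rule subset_Eminus_Eset[OF Lmc_idealD(1)[OF \<open>Lmc_ideal M\<close>]])
qed

theorem theorem2p9:
  fixes dummy :: "'a::{t2_space, semigroup_mult}"
  assumes "\<And>s::'a. continuous_on UNIV (\<lambda>x. s * x)"
      and "\<And>s::'a. continuous_on UNIV (\<lambda>x. x * s)"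
  shows "(\<forall>M::('a \<Rightarrow> complex) set. Lmc_maximal_ideal M \<longrightarrow> e_ultrafilter (Eset M))
       \<and> (\<forall>\<A>::'a set set. e_ultrafilter \<A> \<longrightarrow> Lmc_maximal_ideal (Eminus \<A>))
       \<and> bij_betw Eset {M::('a \<Rightarrow> complex) set. Lmc_maximal_ideal M} {\<A>. e_ultrafilter \<A>}"
proof -
  have left_cont: "\<And>s::'a. continuous_on UNIV ((*) s)"
    using assms(1) by simp
  note to_ultrafilter = e_ultrafilter_Eset[OF left_cont]
    and to_maximal = Lmc_maximal_ideal_Eminus[OF left_cont]
  let ?Max = "{M::('a \<Rightarrow> complex) set. Lmc_maximal_ideal M}" and ?Ult = "{\<A>::'a set set. e_ultrafilter \<A>}"
  have "bij_betw Eset ?Max ?Ult"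
  proof (rule bij_betw_byWitness[where f' = Eminus])
    show "\<forall>M\<in>?Max. Eminus (Eset M) = M"
      using Eminus_Eset_maximal_ideal[OF left_cont] by simp
    show "\<forall>\<A>\<in>?Ult. Eset (Eminus \<A>) = \<A>"
      unfolding e_ultrafilter_def using e_filterD by blast
    show "Eset ` ?Max \<subseteq> ?Ult"
      using to_ultrafilter by auto
    show "Eminus ` ?Ult \<subseteq> ?Max"
      using to_maximal by auto
  qed
  then show ?thesis
    using to_ultrafilter to_maximal by simp
qed

end
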